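(* Let \(m\) be a positive integer that is not a perfect square, and let \(a,b,c\) be positive integers with \(\gcd(am,b^2-c^2m)=1\). Then \[Frob(a\sqrt m,\,b+c\sqrt m)=(a\sqrt m-1)(b+c\sqrt m-1)(1+\sqrt m)+\mathbb N[\sqrt m].\]
   Context: \(\mathbb N\) denotes the set of non-negative integers. \(\mathbb Z[\sqrt m]=\{u+v\sqrt m\mid u,v\in\mathbb Z\}\) and \(\mathbb N[\sqrt m]=\{u+v\sqrt m\mid u,v\in\mathbb N\}\). For \(\alpha_1,\alpha_2\in\mathbb Z[\sqrt m]\), \(SG(\alpha_1,\alpha_2)=\{\lambda_1\alpha_1+\lambda_2\alpha_2\mid \lambda_1,\lambda_2\in\mathbb N[\sqrt m]\}\) and \(Frob(\alpha_1,\alpha_2)=\{w\in\mathbb Z[\sqrt m]\mid w+\mathbb N[\sqrt m]\subseteq SG(\alpha_1,\alpha_2)\}\). *)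

theory Defs
  imports Main
begin

text \<open>Elements u + v sqrt m of Z[sqrt m] are represented by pairs (u, v) of integers.
  Since m is not a perfect square, this representation is unique.\<close>

type_synonym zsqrt = "int \<times> int"

definition zs_add :: "zsqrt \<Rightarrow> zsqrt \<Rightarrow> zsqrt" where
  "zs_add x y = (fst x + fst y, snd x + snd y)"

definition zs_mult :: "int \<Rightarrow> zsqrt \<Rightarrow> zsqrt \<Rightarrow> zsqrt" where
  "zs_mult m x y = (fst x * fst y + m * snd x * snd y, fst x * snd y + snd x * fst y)"

definition Nsqrt :: "zsqrt set" where
  "Nsqrt = {(u, v). u \<ge> 0 \<and> v \<ge> 0}"

definition SG :: "int \<Rightarrow> zsqrt \<Rightarrow> zsqrt \<Rightarrow> zsqrt set" where
  "SG m \<alpha>1 \<alpha>2 = {zs_add (zs_mult m l1 \<alpha>1) (zs_mult m l2 \<alpha>2) | l1 l2. l1 \<in> Nsqrt \<and> l2 \<in> Nsqrt}"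

definition Frob :: "int \<Rightarrow> zsqrt \<Rightarrow> zsqrt \<Rightarrow> zsqrt set" where
  "Frob m \<alpha>1 \<alpha>2 = {w. \<forall>n \<in> Nsqrt. zs_add w n \<in> SG m \<alpha>1 \<alpha>2}"

end

theory Submission
  imports Defs
begin

text \<open>Write \<open>\<beta> = b + c\<surd>m\<close>. The set \<open>SG(a\<surd>m, \<beta>)\<close> consists of the sums \<open>a\<surd>m \<lambda>\<^sub>1 + \<beta> \<lambda>\<^sub>2\<close>,
  and \<open>a\<surd>m \<int>[\<surd>m] = {(a m u, a v)}\<close> has the box \<open>[0, a m) \<times> [0, a)\<close> as a system of residues.
  Since \<open>gcd(a m, b\<^sup>2 - c\<^sup>2 m) = 1\<close>, multiplication by \<open>\<beta>\<close> permutes these residues, so every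
  \<open>w\<close> is congruent to \<open>\<beta> r\<close> for exactly one \<open>r\<close> in the box, and \<open>w \<in> SG\<close> iff \<open>w \<ge> \<beta> r\<close>
  coordinatewise. Hence the quadrant above \<open>\<beta> (a m - 1, a - 1) - (a m - 1, a - 1)\<close>, which is the
  claimed Frobenius element, lies in \<open>SG\<close>, while the column and the row just below it meet
  the complement of \<open>SG\<close> arbitrarily far out: those points are congruent to the corner
  \<open>\<beta> (a m - 1, a - 1)\<close> but do not dominate it.\<close>

lemma mem_SG_iff:
  "(X, Y) \<in> SG m (0, a) (b, c) \<longleftrightarrow>
   (\<exists>x1 y1 x2 y2. 0 \<le> x1 \<and> 0 \<le> y1 \<and> 0 \<le> x2 \<and> 0 \<le> y2 \<and>
      X = a*m*y1 + (b*x2 + m*c*y2) \<and> Y = a*x1 + (c*x2 + b*y2))"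
proof
  assume "(X, Y) \<in> SG m (0, a) (b, c)"
  then obtain x1 y1 x2 y2 where "(X, Y) = zs_add (zs_mult m (x1, y1) (0, a)) (zs_mult m (x2, y2) (b, c))"
    and "(x1, y1) \<in> Nsqrt" "(x2, y2) \<in> Nsqrt"
    unfolding SG_def by auto
  then have "0 \<le> x1 \<and> 0 \<le> y1 \<and> 0 \<le> x2 \<and> 0 \<le> y2 \<and>
      X = a*m*y1 + (b*x2 + m*c*y2) \<and> Y = a*x1 + (c*x2 + b*y2)"
    unfolding Nsqrt_def zs_add_def zs_mult_def by (auto simp: algebra_simps)
  then show "\<exists>x1 y1 x2 y2. 0 \<le> x1 \<and> 0 \<le> y1 \<and> 0 \<le> x2 \<and> 0 \<le> y2 \<and>
      X = a*m*y1 + (b*x2 + m*c*y2) \<and> Y = a*x1 + (c*x2 + b*y2)"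
    by blast
next
  assume "\<exists>x1 y1 x2 y2. 0 \<le> x1 \<and> 0 \<le> y1 \<and> 0 \<le> x2 \<and> 0 \<le> y2 \<and>
      X = a*m*y1 + (b*x2 + m*c*y2) \<and> Y = a*x1 + (c*x2 + b*y2)"
  then obtain x1 y1 x2 y2 where h: "0 \<le> x1" "0 \<le> y1" "0 \<le> x2" "0 \<le> y2"
      "X = a*m*y1 + (b*x2 + m*c*y2)" "Y = a*x1 + (c*x2 + b*y2)" by blast
  then have "(X, Y) = zs_add (zs_mult m (x1, y1) (0, a)) (zs_mult m (x2, y2) (b, c))"
    unfolding zs_add_def zs_mult_def by (simp add: algebra_simps)
  moreover have "(x1, y1) \<in> Nsqrt" "(x2, y2) \<in> Nsqrt" using h unfolding Nsqrt_def by auto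
  ultimately show "(X, Y) \<in> SG m (0, a) (b, c)" unfolding SG_def by blast
qed

lemma ge_if_dvd_diff_gt:
  fixes d x y :: int
  assumes "d dvd x - y" and "y - d < x"
  shows "y \<le> x"
proof -
  obtain k where k: "x - y = d * k" using assms(1) by (auto elim: dvdE)
  show ?thesis
  proof (cases "0 < d")
    case True
    with k assms(2) have "0 < d * (k + 1)" by (simp add: algebra_simps)
    with True have "0 \<le> k" by (simp add: zero_less_mult_iff)
    with True have "0 \<le> d * k" by simp
    with k show ?thesis by simp
  qed (use assms(2) in simp)
qed

lemma exists_ge_dvd_diff:
  fixes d r y0 :: int
  assumes "0 < d"
  shows "\<exists>y \<ge> y0. d dvd y - r"
proof (intro exI conjI)
  show "y0 \<le> y0 + (r - y0) mod d" using assms by simp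
  have "y0 + (r - y0) mod d - r = d * (- ((r - y0) div d))"
    by (simp add: algebra_simps minus_div_mult_eq_mod[symmetric])
  then show "d dvd y0 + (r - y0) mod d - r" by simp
qed

text \<open>If \<open>\<delta> = (dx, dy)\<close>, the hypotheses say \<open>\<beta> \<delta> \<in> a\<surd>m \<int>[\<surd>m]\<close>; multiplying by the
  conjugate \<open>b - c\<surd>m\<close> gives \<open>(b\<^sup>2 - c\<^sup>2 m) \<delta> \<in> a\<surd>m \<int>[\<surd>m]\<close>, and the norm is a unit modulo \<open>a m\<close>.\<close>

lemma beta_residue_cancel:
  fixes a m b c dx dy :: int
  assumes cop: "coprime (a*m) (b^2 - c^2*m)"
    and h1: "a*m dvd b*dx + m*c*dy" and h2: "a dvd c*dx + b*dy"
  shows "a*m dvd dx \<and> a dvd dy"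
proof -
  let ?D = "b^2 - c^2*m"
  have "?D*dy = b*(c*dx + b*dy) - c*(b*dx + m*c*dy)"
    by (simp add: algebra_simps power2_eq_square)
  moreover have "a dvd b*dx + m*c*dy" using h1 by (metis dvd_mult_left)
  ultimately have "a dvd ?D*dy" using h2 by (simp add: dvd_diff)
  moreover have "coprime a ?D" using cop by simp
  ultimately have ady: "a dvd dy" by (simp add: coprime_dvd_mult_right_iff)
  then obtain k where k: "dy = a*k" by auto
  have "b*dx = (b*dx + m*c*dy) - a*m*(c*k)" using k by (simp add: algebra_simps)
  then have "a*m dvd b*(b*dx)" using h1 by (metis dvd_diff dvd_triv_left dvd_mult)
  moreover have "c*dx = (c*dx + b*dy) - a*(b*k)" using k by (simp add: algebra_simps)
  then have "a*m dvd m*c*(c*dx)" using h2 by (metis dvd_diff dvd_triv_left mult_dvd_mono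
      mult.commute dvd_refl)
  moreover have "?D*dx = b*(b*dx) - m*c*(c*dx)" by (simp add: algebra_simps power2_eq_square)
  ultimately have "a*m dvd ?D*dx" by (simp add: dvd_diff)
  then have "a*m dvd dx" using cop by (simp add: coprime_dvd_mult_right_iff)
  with ady show ?thesis by simp
qed

lemma beta_residue_exists:
  fixes a m b c r s :: int
  assumes cop: "coprime (a*m) (b^2 - c^2*m)" and "0 < a" and "0 < m"
  shows "\<exists>x y. 0 \<le> x \<and> x < a*m \<and> 0 \<le> y \<and> y < a \<and>
      a*m dvd r - (b*x + m*c*y) \<and> a dvd s - (c*x + b*y)"
proof -
  let ?D = "b^2 - c^2*m"
  obtain u v where uv: "u*?D + v*(a*m) = 1"
    using cop by (metis bezout_int coprime_iff_gcd_eq_1 gcd.commute)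
  define x0 where "x0 = u*(b*r - m*c*s)"
  define y0 where "y0 = u*(b*s - c*r)"
  define x where "x = x0 mod (a*m)"
  define y where "y = y0 mod a"
  have x: "x = x0 - a*m*(x0 div (a*m))" and y: "y = y0 - a*(y0 div a)"
    unfolding x_def y_def by (simp_all add: minus_div_mult_eq_mod[symmetric] algebra_simps)
  have E: "b*x0 + m*c*y0 = (u*?D)*r" "c*x0 + b*y0 = (u*?D)*s"
    unfolding x0_def y0_def by (simp_all add: algebra_simps power2_eq_square)
  have U: "u*?D = 1 - a*m*v" using uv by (simp add: algebra_simps)
  have "r - (b*x0 + m*c*y0) = a*m*(v*r)" "s - (c*x0 + b*y0) = a*(m*v*s)"
    unfolding E U by (simp_all add: algebra_simps)
  then have "r - (b*x + m*c*y) = a*m*(v*r + b*(x0 div (a*m)) + c*(y0 div a))"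
    and "s - (c*x + b*y) = a*(m*v*s + c*m*(x0 div (a*m)) + b*(y0 div a))"
    unfolding x y by (simp_all add: algebra_simps)
  moreover have "0 \<le> x" "x < a*m" "0 \<le> y" "y < a" unfolding x_def y_def using assms by auto
  ultimately show ?thesis by (metis dvd_triv_left)
qed

context
  fixes m a b c :: int
  assumes cop: "coprime (a*m) (b^2 - c^2*m)"
    and a_pos: "0 < a" and m_pos: "0 < m" and b_nonneg: "0 \<le> b" and c_nonneg: "0 \<le> c"
begin

lemma mem_SG_iff_ge_box_rep:
  assumes x: "0 \<le> x" "x < a*m" and y: "0 \<le> y" "y < a"
    and dX: "a*m dvd X - (b*x + m*c*y)" and dY: "a dvd Y - (c*x + b*y)"
  shows "(X, Y) \<in> SG m (0, a) (b, c) \<longleftrightarrow> b*x + m*c*y \<le> X \<and> c*x + b*y \<le> Y"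
proof
  assume "(X, Y) \<in> SG m (0, a) (b, c)"
  then obtain x1 y1 x2 y2 where h: "0 \<le> x1" "0 \<le> y1" "0 \<le> x2" "0 \<le> y2"
      "X = a*m*y1 + (b*x2 + m*c*y2)" "Y = a*x1 + (c*x2 + b*y2)"
    unfolding mem_SG_iff by blast
  have "b*(x2 - x) + m*c*(y2 - y) = (X - (b*x + m*c*y)) - a*m*y1"
    and "c*(x2 - x) + b*(y2 - y) = (Y - (c*x + b*y)) - a*x1"
    unfolding h by (simp_all add: algebra_simps)
  with dX dY have "a*m dvd x2 - x" "a dvd y2 - y"
    using beta_residue_cancel[OF cop] by (metis dvd_diff dvd_triv_left)+
  with h x y have "x \<le> x2" "y \<le> y2" using ge_if_dvd_diff_gt by force+
  then have "b*x + m*c*y \<le> b*x2 + m*c*y2" "c*x + b*y \<le> c*x2 + b*y2"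
    using b_nonneg c_nonneg m_pos by (simp_all add: add_mono mult_left_mono)
  moreover have "0 \<le> a*m*y1" "0 \<le> a*x1" using h a_pos m_pos by simp_all
  ultimately show "b*x + m*c*y \<le> X \<and> c*x + b*y \<le> Y" using h by linarith
next
  assume ge: "b*x + m*c*y \<le> X \<and> c*x + b*y \<le> Y"
  obtain k1 where k1: "X - (b*x + m*c*y) = a*m*k1" using dX by (auto elim: dvdE)
  obtain k2 where k2: "Y - (c*x + b*y) = a*k2" using dY by (auto elim: dvdE)
  have "0 \<le> (a*m)*k1" "0 \<le> a*k2" using ge k1 k2 by simp_all
  then have "0 \<le> k1" "0 \<le> k2" using a_pos mult_pos_pos[OF a_pos m_pos]
    by (simp_all add: zero_le_mult_iff)
  with k1 k2 x y show "(X, Y) \<in> SG m (0, a) (b, c)"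
    unfolding mem_SG_iff by (intro exI[of _ k2] exI[of _ k1] exI[of _ x] exI[of _ y]) auto
qed

lemma quadrant_subset_SG:
  assumes "b*(a*m-1) + m*c*(a-1) - a*m < X" and "c*(a*m-1) + b*(a-1) - a < Y"
  shows "(X, Y) \<in> SG m (0, a) (b, c)"
proof -
  obtain x y where xy: "0 \<le> x" "x < a*m" "0 \<le> y" "y < a"
     "a*m dvd X - (b*x + m*c*y)" "a dvd Y - (c*x + b*y)"
    using beta_residue_exists[OF cop a_pos m_pos] by blast
  have "b*x + m*c*y \<le> b*(a*m-1) + m*c*(a-1)" "c*x + b*y \<le> c*(a*m-1) + b*(a-1)"
    using xy b_nonneg c_nonneg m_pos by (simp_all add: add_mono mult_left_mono)
  with assms xy show ?thesis
    by (simp add: mem_SG_iff_ge_box_rep ge_if_dvd_diff_gt)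
qed

lemma not_mem_SG_below_corner:
  assumes dX: "a*m dvd X - (b*(a*m-1) + m*c*(a-1))" and dY: "a dvd Y - (c*(a*m-1) + b*(a-1))"
    and "X < b*(a*m-1) + m*c*(a-1) \<or> Y < c*(a*m-1) + b*(a-1)"
  shows "(X, Y) \<notin> SG m (0, a) (b, c)"
  using mem_SG_iff_ge_box_rep[of "a*m-1" "a-1"] assms a_pos m_pos by auto

end

lemma translate_Nsqrt: "{zs_add F n | n. n \<in> Nsqrt} = {(X, Y). fst F \<le> X \<and> snd F \<le> Y}"
proof (intro set_eqI iffI)
  fix z assume "z \<in> {(X, Y). fst F \<le> X \<and> snd F \<le> Y}"
  moreover have "z = zs_add F (fst z - fst F, snd z - snd F)" by (simp add: zs_add_def)
  ultimately show "z \<in> {zs_add F n | n. n \<in> Nsqrt}" unfolding Nsqrt_def by force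
qed (auto simp: Nsqrt_def zs_add_def)

lemma Frob_eq_quadrant:
  assumes quadrant: "\<And>X Y. F1 \<le> X \<Longrightarrow> F2 \<le> Y \<Longrightarrow> (X, Y) \<in> SG m \<alpha> \<beta>"
    and column: "\<And>Y0. \<exists>Y \<ge> Y0. (F1 - 1, Y) \<notin> SG m \<alpha> \<beta>"
    and row: "\<And>X0. \<exists>X \<ge> X0. (X, F2 - 1) \<notin> SG m \<alpha> \<beta>"
  shows "Frob m \<alpha> \<beta> = {(X, Y). F1 \<le> X \<and> F2 \<le> Y}"
proof (intro set_eqI iffI)
  fix w assume w: "w \<in> Frob m \<alpha> \<beta>"
  obtain w1 w2 where ww: "w = (w1, w2)" by (cases w)
  have escape: "\<not> (w1 \<le> X \<and> w2 \<le> Y)" if "(X, Y) \<notin> SG m \<alpha> \<beta>" for X Y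
  proof
    assume "w1 \<le> X \<and> w2 \<le> Y"
    then have "(X - w1, Y - w2) \<in> Nsqrt" unfolding Nsqrt_def by simp
    with w have "zs_add w (X - w1, Y - w2) \<in> SG m \<alpha> \<beta>" unfolding Frob_def by blast
    with that show False unfolding ww zs_add_def by simp
  qed
  have "F1 \<le> w1" using column[of w2] escape by force
  moreover have "F2 \<le> w2" using row[of w1] escape by force
  ultimately show "w \<in> {(X, Y). F1 \<le> X \<and> F2 \<le> Y}" using ww by simp
next
  fix w assume "w \<in> {(X, Y). F1 \<le> X \<and> F2 \<le> Y}"
  then show "w \<in> Frob m \<alpha> \<beta>"
    unfolding Frob_def Nsqrt_def zs_add_def by (auto intro: quadrant)
qed

theorem theorem4:
  fixes m a b c :: int
  assumes "m > 0" and "\<not> (\<exists>k::int. k ^ 2 = m)"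
    and "a > 0" and "b > 0" and "c > 0"
    and "gcd (a * m) (b ^ 2 - c ^ 2 * m) = 1"
  shows "Frob m (0, a) (b, c) =
    {zs_add (zs_mult m (zs_mult m (-1, a) (b - 1, c)) (1, 1)) n | n. n \<in> Nsqrt}"
proof -
  have cop: "coprime (a*m) (b^2 - c^2*m)" using assms(6) by (simp add: coprime_iff_gcd_eq_1)
  note facts = cop assms(3,1) less_imp_le[OF assms(4)] less_imp_le[OF assms(5)]
  define B1 where "B1 = b*(a*m-1) + m*c*(a-1)"
  define B2 where "B2 = c*(a*m-1) + b*(a-1)"
  have F: "zs_mult m (zs_mult m (-1, a) (b - 1, c)) (1, 1) = (B1 - a*m + 1, B2 - a + 1)"
    unfolding zs_mult_def B1_def B2_def by (simp add: algebra_simps)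
  show ?thesis unfolding translate_Nsqrt F fst_conv snd_conv
  proof (intro Frob_eq_quadrant)
    show "(X, Y) \<in> SG m (0, a) (b, c)" if "B1 - a*m + 1 \<le> X" "B2 - a + 1 \<le> Y" for X Y
      using that quadrant_subset_SG[OF facts] unfolding B1_def B2_def by simp
    show "\<exists>Y \<ge> Y0. (B1 - a*m + 1 - 1, Y) \<notin> SG m (0, a) (b, c)" for Y0
      using exists_ge_dvd_diff[OF assms(3), of Y0 B2] not_mem_SG_below_corner[OF facts]
        assms(1,3) unfolding B1_def B2_def by force
    show "\<exists>X \<ge> X0. (X, B2 - a + 1 - 1) \<notin> SG m (0, a) (b, c)" for X0
      using exists_ge_dvd_diff[of "a*m" X0 B1] not_mem_SG_below_corner[OF facts]
        assms(1,3) unfolding B1_def B2_def by force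
  qed
qed

end
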